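(* Let $1<p\le2$ and $T\in(0,\infty)$. For $M\in\mathbb N$ and $h>0$ let non-negative sequences $\{a_m(h)\}_{m=0}^M$, $\{b_m(h)\}_{m=0}^M$, $\{r_m(h,\kappa)\}_{m=1}^M$, $\{s_m(h,\kappa)\}_{m=1}^M$, $\{\rho_m(h,\kappa)\}_{m=1}^M$, $\{\sigma_m(h,\kappa)\}_{m=1}^M$ be given, where $\kappa=T/M$. Assume there exist $\mu_0,\widehat\kappa>0$ such that for all $0<h<1/\sqrt{\mu_0}$ and $0<\kappa<\widehat\kappa$: $$a_0^2\le\mu_0h^2,\ \ b_0^2\le\mu_0h^2,\ \ \kappa\sum_{m=1}^Mr_m^2\le\mu_0h^2,\ \ \kappa\sum_{m=1}^Ms_m^2\le\mu_0h^2,\ \ \kappa\sum_{m=1}^M\rho_m^2\le\mu_0\kappa^2,\ \ \kappa\sum_{m=1}^M\sigma_m^2\le\mu_0\kappa^2.$$ Further, assume there exist constants $\mu_1,\mu_2,\mu_3>0$, $\Lambda>0$ and $0<\theta\le1$ such that for some $\lambda\in[0,\Lambda]$, for all $0<h<1/\sqrt{\mu_0}$, $0<\kappa<\widehat\kappa$ and $m=1,\dots,M$, both $$d_ta_m^2+\mu_1(\lambda+b_m)^{p-2}b_m^2\le b_mr_m+b_m\rho_m+\mu_2b_{m-1}b_m+s_m^2+\sigma_m^2,$$ $$d_ta_m^2+\mu_1(\lambda+b_m)^{p-2}b_m^2\le b_mr_m+b_m\rho_m+\mu_3b_mb_{m-1}^{1-\theta}a_{m-1}^{\theta}+s_m^2+\sigma_m^2$$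 hold (with the convention $(\lambda+b_m)^{p-2}b_m^2=0$ if $\lambda=b_m=0$). Then there exist constants $\overline{\mu_0},\overline\kappa>0$ and $\mu_4,\mu_5>0$, independent of $\lambda$, such that for all $\kappa,h>0$ with $\kappa<\overline\kappa$ and $h^2<\overline{\mu_0}\,\kappa$: $$\max_{0\le m\le M}b_m\le1,\qquad \max_{0\le m\le M}a_m^2+\mu_1(1+\Lambda)^{p-2}\kappa\sum_{m=0}^Mb_m^2\le\mu_4(h^2+\kappa^2)\exp(2\mu_5\kappa M).$$
   Context: $d_ta_m^2=(a_m^2-a_{m-1}^2)/\kappa$ denotes the backward difference quotient with step $\kappa=T/M$. *)

theory Defs
  imports Complex_Main
begin

definition dt_sq :: "real \<Rightarrow> (nat \<Rightarrow> real) \<Rightarrow> nat \<Rightarrow> real" where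
  "dt_sq \<kappa> a m = ((a m)\<^sup>2 - (a (m - 1))\<^sup>2) / \<kappa>"

end

theory Submission
  imports Defs
begin

(* Write c = mu1 (1 + Lambda)^(p - 2). On a step with b_m <= 1 the dissipation term is at least
   c b_m^2; splitting b_{m-1}^(1 - theta) a_{m-1}^theta by weighted AM-GM and applying Young's
   inequality to every product on the right-hand side turns the step inequality into
     E_m <= (1 + kappa C) E_{m-1} + kappa g_m,
     E_m = a_m^2 + (c/16) kappa b_m^2 + (c/2) kappa sum_{1 <= j <= m} b_j^2,
   with g_m collecting r_m, rho_m, s_m, sigma_m, so that discrete Gronwall bounds every E_m by
   (1 + kappa C)^M (E_0 + kappa sum g) <= e^(C T) A (h^2 + kappa^2).
   The premise b_m <= 1 is recovered along the way: if b_m > 1 the dissipation is at least c b_m,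
   while the right-hand side is at most (3c/4) b_m + O(h^2/kappa + kappa) as soon as a_{m-1}^2 is
   known to obey the Gronwall bound; this is impossible once h^2/kappa and kappa are small.
   Only the second of the two step inequalities of the hypothesis is needed. *)

lemma mult_le_weighted_squares:
  fixes c x y :: real
  assumes "0 < c"
  shows "x * y \<le> c * x\<^sup>2 + y\<^sup>2 / (4 * c)"
proof -
  have "c * x\<^sup>2 + y\<^sup>2 / (4 * c) - x * y = (2 * c * x - y)\<^sup>2 / (4 * c)"
    using assms by (simp add: field_simps power2_eq_square)
  moreover have "0 \<le> (2 * c * x - y)\<^sup>2 / (4 * c)"
    using assms by simp
  ultimately show ?thesis by linarith
qed

lemma powr_interpolation_le_add:
  fixes x y \<theta> :: real
  assumes "0 \<le> x" "0 \<le> y" "0 \<le> \<theta>" "\<theta> \<le> 1"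
  shows "x powr (1 - \<theta>) * y powr \<theta> \<le> x + y"
proof -
  have "x powr (1 - \<theta>) * y powr \<theta> \<le> max x y powr (1 - \<theta>) * max x y powr \<theta>"
    using assms by (intro mult_mono powr_mono2) auto
  also have "\<dots> = max x y"
    using assms by (simp add: powr_add [symmetric])
  also have "\<dots> \<le> x + y"
    using assms by simp
  finally show ?thesis .
qed

lemma powr_interpolation_le_weighted:
  fixes x y \<theta> \<delta> :: real
  assumes "0 \<le> x" "0 \<le> y" "0 < \<theta>" "\<theta> \<le> 1" "0 < \<delta>"
  shows "x powr (1 - \<theta>) * y powr \<theta> \<le> \<delta> * x + \<delta> powr ((\<theta> - 1) / \<theta>) * y"
proof -
  let ?L = "\<delta> powr ((\<theta> - 1) / \<theta>)"
  have "\<delta> powr (1 - \<theta>) * ?L powr \<theta> = 1"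
    using assms by (simp add: powr_powr powr_add [symmetric])
  then have "x powr (1 - \<theta>) * y powr \<theta> = (\<delta> * x) powr (1 - \<theta>) * (?L * y) powr \<theta>"
    using assms by (simp add: powr_mult)
  also have "\<dots> \<le> \<delta> * x + ?L * y"
    using assms by (intro powr_interpolation_le_add) auto
  finally show ?thesis .
qed

lemma coercive_term_ge_sq:
  fixes \<mu> lam \<Lambda> b p :: real
  assumes "0 \<le> \<mu>" "0 \<le> lam" "lam \<le> \<Lambda>" "0 \<le> b" "b \<le> 1" "p \<le> 2"
  shows "\<mu> * (1 + \<Lambda>) powr (p - 2) * b\<^sup>2 \<le> \<mu> * (lam + b) powr (p - 2) * b\<^sup>2"
proof (cases "b = 0")
  case False
  with assms have "(1 + \<Lambda>) powr (p - 2) \<le> (lam + b) powr (p - 2)"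
    by (intro powr_mono2') auto
  then show ?thesis
    using assms by (simp add: mult_left_mono mult_right_mono)
qed simp

lemma coercive_term_ge_linear:
  fixes \<mu> lam \<Lambda> b p :: real
  assumes "0 \<le> \<mu>" "0 \<le> lam" "lam \<le> \<Lambda>" "1 \<le> b" "1 < p" "p \<le> 2"
  shows "\<mu> * (1 + \<Lambda>) powr (p - 2) * b \<le> \<mu> * (lam + b) powr (p - 2) * b\<^sup>2"
proof -
  have "lam + b \<le> (1 + \<Lambda>) * b"
    using assms mult_left_mono [of 1 b \<Lambda>] by (simp add: distrib_right)
  with assms have "((1 + \<Lambda>) * b) powr (p - 2) \<le> (lam + b) powr (p - 2)"
    by (intro powr_mono2') auto
  then have "(1 + \<Lambda>) powr (p - 2) * b powr (p - 2) * b\<^sup>2 \<le> (lam + b) powr (p - 2) * b\<^sup>2"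
    using assms by (simp add: powr_mult mult_right_mono)
  moreover have "b powr (p - 2) * b\<^sup>2 = b powr p"
    using assms by (simp add: powr_add [symmetric] flip: powr_numeral)
  moreover have "b \<le> b powr p"
    using assms powr_mono [of 1 p b] by simp
  ultimately have "(1 + \<Lambda>) powr (p - 2) * b \<le> (lam + b) powr (p - 2) * b\<^sup>2"
    using assms by (smt (verit) mult.assoc mult_left_mono powr_ge_zero)
  then show ?thesis
    using assms by (simp add: mult.assoc mult_left_mono)
qed

lemma mult_powr_le_of_le_root:
  fixes \<mu> \<theta> c y :: real
  assumes "0 < \<mu>" "0 < \<theta>" "0 < c" "0 \<le> y" "y \<le> (c / \<mu>) powr (1 / \<theta>)"
  shows "\<mu> * y powr \<theta> \<le> c"
proof -
  have "y powr \<theta> \<le> ((c / \<mu>) powr (1 / \<theta>)) powr \<theta>"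
    using assms by (intro powr_mono2) auto
  also have "\<dots> = c / \<mu>"
    using assms by (simp add: powr_powr)
  finally show ?thesis
    using assms by (simp add: field_simps)
qed

lemma sq_le_of_scaled_sum_sq:
  fixes f :: "nat \<Rightarrow> real" and \<kappa> K :: real
  assumes "0 < \<kappa>" "\<kappa> * (\<Sum>j=1..M. (f j)\<^sup>2) \<le> K" "1 \<le> m" "m \<le> M"
  shows "(f m)\<^sup>2 \<le> K / \<kappa>"
proof -
  have "(f m)\<^sup>2 \<le> (\<Sum>j=1..M. (f j)\<^sup>2)"
    using assms by (intro member_le_sum) auto
  with assms show ?thesis
    by (simp add: field_simps) (smt (verit) mult_left_mono)
qed

(* The constant of Young's inequality applied to mu b a after splitting
   b0^(1 - theta) a0^theta <= delta b0 + delta^((theta - 1)/theta) a0 with delta = c/(8 mu). *)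
definition gronwall_rate :: "real \<Rightarrow> real \<Rightarrow> real \<Rightarrow> real" where
  "gronwall_rate c \<mu> \<theta> = 2 * (\<mu> * (c / (8 * \<mu>)) powr ((\<theta> - 1) / \<theta>))\<^sup>2 / c"

lemma gronwall_rate_pos: "0 < c \<Longrightarrow> 0 < \<mu> \<Longrightarrow> 0 < gronwall_rate c \<mu> \<theta>"
  by (simp add: gronwall_rate_def)

lemma step_stays_le_one:
  fixes dt D E S r \<rho> a0 b0 b1 c \<mu> \<theta> :: real
  assumes "0 < c" "\<theta> \<le> 1" "0 \<le> b0" "b0 \<le> 1" "0 \<le> b1"
    and "r \<le> c / 4" "\<rho> \<le> c / 4" "\<mu> * a0 powr \<theta> \<le> c / 4" "0 \<le> \<mu>"
    and "- E \<le> dt" "E + S < c / 4"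
    and coercive: "1 < b1 \<Longrightarrow> c * b1 \<le> D"
    and step: "dt + D \<le> b1 * r + b1 * \<rho> + \<mu> * b1 * b0 powr (1 - \<theta>) * a0 powr \<theta> + S"
  shows "b1 \<le> 1"
proof (rule ccontr)
  assume "\<not> b1 \<le> 1"
  then have "1 < b1" by simp
  have "b0 powr (1 - \<theta>) * (\<mu> * a0 powr \<theta>) \<le> 1 * (c / 4)"
    using assms powr_mono2 [of "1 - \<theta>" b0 1] by (intro mult_mono) auto
  then have "\<mu> * b1 * b0 powr (1 - \<theta>) * a0 powr \<theta> \<le> b1 * (c / 4)"
    using \<open>0 \<le> b1\<close> mult_left_mono by (fastforce simp: algebra_simps)
  moreover have "b1 * r \<le> b1 * (c / 4)" "b1 * \<rho> \<le> b1 * (c / 4)"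
    using assms by (intro mult_left_mono; simp)+
  moreover have "b1 * (c / 4) = c * b1 / 4"
    by simp
  ultimately have "c * b1 / 4 \<le> E + S"
    using \<open>1 < b1\<close> coercive step \<open>- E \<le> dt\<close> by linarith
  moreover have "c / 4 < c * b1 / 4"
    using \<open>1 < b1\<close> \<open>0 < c\<close> by simp
  ultimately show False
    using \<open>E + S < c / 4\<close> by linarith
qed

lemma step_energy_inequality:
  fixes dt D S r \<rho> a0 b0 b1 c \<mu> \<theta> :: real
  assumes "0 < c" "0 < \<mu>" "0 < \<theta>" "\<theta> \<le> 1" "0 \<le> a0" "0 \<le> b0" "0 \<le> b1"
    and coercive: "c * b1\<^sup>2 \<le> D"
    and step: "dt + D \<le> b1 * r + b1 * \<rho> + \<mu> * b1 * b0 powr (1 - \<theta>) * a0 powr \<theta> + S"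
  shows "dt + 9 * c / 16 * b1\<^sup>2
    \<le> c / 16 * b0\<^sup>2 + 2 * (r\<^sup>2 + \<rho>\<^sup>2) / c + S + gronwall_rate c \<mu> \<theta> * a0\<^sup>2"
proof -
  define \<delta> where "\<delta> = c / (8 * \<mu>)"
  define L where "L = \<delta> powr ((\<theta> - 1) / \<theta>)"
  have "b0 powr (1 - \<theta>) * a0 powr \<theta> \<le> \<delta> * b0 + L * a0"
    unfolding L_def using assms by (intro powr_interpolation_le_weighted) (auto simp: \<delta>_def)
  then have "\<mu> * b1 * b0 powr (1 - \<theta>) * a0 powr \<theta> \<le> \<mu> * b1 * (\<delta> * b0 + L * a0)"
    using assms by (simp add: mult.assoc mult_left_mono)
  also have "\<dots> = c / 8 * (b1 * b0) + b1 * (\<mu> * L * a0)"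
    using assms by (simp add: \<delta>_def algebra_simps)
  also have "\<dots> \<le> c / 16 * (b1\<^sup>2 + b0\<^sup>2) + (c / 8 * b1\<^sup>2 + gronwall_rate c \<mu> \<theta> * a0\<^sup>2)"
  proof (rule add_mono)
    have "c / 8 * (2 * b1 * b0) \<le> c / 8 * (b1\<^sup>2 + b0\<^sup>2)"
      using sum_squares_bound [of b1 b0] assms by (intro mult_left_mono) auto
    then show "c / 8 * (b1 * b0) \<le> c / 16 * (b1\<^sup>2 + b0\<^sup>2)"
      by simp
    show "b1 * (\<mu> * L * a0) \<le> c / 8 * b1\<^sup>2 + gronwall_rate c \<mu> \<theta> * a0\<^sup>2"
      using mult_le_weighted_squares [of "c / 8" b1 "\<mu> * L * a0"] assms
      by (simp add: gronwall_rate_def L_def \<delta>_def power_mult_distrib)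
  qed
  finally have interpolation: "\<mu> * b1 * b0 powr (1 - \<theta>) * a0 powr \<theta>
      \<le> 3 * c / 16 * b1\<^sup>2 + c / 16 * b0\<^sup>2 + gronwall_rate c \<mu> \<theta> * a0\<^sup>2"
    by (simp add: algebra_simps)
  have "b1 * r \<le> c / 8 * b1\<^sup>2 + 2 * r\<^sup>2 / c"
    using mult_le_weighted_squares [of "c / 8" b1 r] assms by (simp add: ac_simps)
  moreover have "b1 * \<rho> \<le> c / 8 * b1\<^sup>2 + 2 * \<rho>\<^sup>2 / c"
    using mult_le_weighted_squares [of "c / 8" b1 \<rho>] assms by (simp add: ac_simps)
  ultimately show ?thesis
    using interpolation coercive step by (simp add: add_divide_distrib)
qed

lemma discrete_gronwall_bootstrap:
  fixes u e :: "nat \<Rightarrow> real" and q B :: real and M :: nat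
  assumes "1 \<le> q" "0 \<le> u 0" "\<And>j. 1 \<le> j \<Longrightarrow> j \<le> M \<Longrightarrow> 0 \<le> e j"
    and bound: "q ^ M * (u 0 + (\<Sum>j=1..M. e j)) \<le> B"
    and step: "\<And>m. m < M \<Longrightarrow> \<forall>j\<le>m. u j \<le> B \<Longrightarrow> u (Suc m) \<le> q * u m + e (Suc m)"
  shows "\<forall>m\<le>M. u m \<le> B"
proof -
  define U where "U m = q ^ m * (u 0 + (\<Sum>j=1..m. e j))" for m
  have U_le_B: "U m \<le> B" if "m \<le> M" for m
  proof -
    have "(\<Sum>j=1..m. e j) \<le> (\<Sum>j=1..M. e j)"
      using that assms by (intro sum_mono2) auto
    moreover have "q ^ m \<le> q ^ M"
      using that assms by (simp add: power_increasing)
    ultimately have "U m \<le> q ^ M * (u 0 + (\<Sum>j=1..M. e j))"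
      unfolding U_def using that assms by (intro mult_mono add_left_mono add_nonneg_nonneg sum_nonneg) auto
    with bound show ?thesis by simp
  qed
  have "\<forall>j\<le>m. u j \<le> U j" if "m \<le> M" for m
    using that
  proof (induction m)
    case (Suc m)
    then have IH: "\<forall>j\<le>m. u j \<le> U j"
      by simp
    with Suc.prems U_le_B have "\<forall>j\<le>m. u j \<le> B"
      by (meson Suc_leD le_trans order_trans)
    then have "u (Suc m) \<le> q * u m + e (Suc m)"
      using Suc.prems step by simp
    also have "\<dots> \<le> q * U m + e (Suc m)"
      using IH assms by simp
    also have "\<dots> \<le> q * U m + q ^ Suc m * e (Suc m)"
      using Suc.prems assms one_le_power [of q "Suc m"] mult_right_mono [of 1 "q ^ Suc m" "e (Suc m)"]
      by simp
    also have "\<dots> = U (Suc m)"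
      by (simp add: U_def algebra_simps)
    finally show ?case
      using Suc by (simp add: le_Suc_eq)
  qed (simp add: U_def)
  with U_le_B show ?thesis
    by (meson order_trans order_refl)
qed

locale discrete_energy_data =
  fixes a b r \<rho> f D :: "nat \<Rightarrow> real" and \<kappa> c \<mu> \<theta> B X :: real and M :: nat
  assumes pos: "0 < \<kappa>" "0 < c" "0 < \<mu>" "0 < \<theta>" "\<theta> \<le> 1"
    and nonneg: "\<And>m. m \<le> M \<Longrightarrow> 0 \<le> a m \<and> 0 \<le> b m"
    and initial_le_one: "b 0 \<le> 1"
    and small: "\<And>m. 1 \<le> m \<Longrightarrow> m \<le> M \<Longrightarrow>
      r m \<le> c / 4 \<and> \<rho> m \<le> c / 4 \<and> 0 \<le> f m \<and> f m \<le> X"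
    and root_small: "\<mu> * sqrt B powr \<theta> \<le> c / 4"
    and source_small: "B / \<kappa> + X < c / 4"
    and coercive: "\<And>m. 1 \<le> m \<Longrightarrow> m \<le> M \<Longrightarrow>
      (b m \<le> 1 \<longrightarrow> c * (b m)\<^sup>2 \<le> D m) \<and> (1 < b m \<longrightarrow> c * b m \<le> D m)"
    and step: "\<And>m. 1 \<le> m \<Longrightarrow> m \<le> M \<Longrightarrow>
      ((a m)\<^sup>2 - (a (m - 1))\<^sup>2) / \<kappa> + D m
        \<le> b m * r m + b m * \<rho> m + \<mu> * b m * b (m - 1) powr (1 - \<theta>) * a (m - 1) powr \<theta> + f m"
begin

definition energy :: "nat \<Rightarrow> real" where
  "energy m = (a m)\<^sup>2 + \<kappa> * c / 16 * (b m)\<^sup>2 + c / 2 * \<kappa> * (\<Sum>j=1..m. (b j)\<^sup>2)"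

definition source :: "nat \<Rightarrow> real" where
  "source m = 2 * ((r m)\<^sup>2 + (\<rho> m)\<^sup>2) / c + f m"

lemma energy_ge: "(a m)\<^sup>2 \<le> energy m" "c / 2 * \<kappa> * (\<Sum>j=1..m. (b j)\<^sup>2) \<le> energy m"
  using pos by (simp_all add: energy_def sum_nonneg)

lemma le_one_upto:
  assumes "n \<le> M" "\<forall>j<n. (a j)\<^sup>2 \<le> B"
  shows "\<forall>j\<le>n. b j \<le> 1"
  using assms
proof (induction n)
  case (Suc n)
  then have "b n \<le> 1" "(a n)\<^sup>2 \<le> B"
    by simp_all
  have "\<mu> * a n powr \<theta> \<le> \<mu> * sqrt B powr \<theta>"
    using Suc.prems nonneg \<open>(a n)\<^sup>2 \<le> B\<close> pos by (intro mult_left_mono powr_mono2 real_le_rsqrt) auto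
  then have a_small: "\<mu> * a n powr \<theta> \<le> c / 4"
    using root_small by linarith
  have "- B \<le> (a (Suc n))\<^sup>2 - (a n)\<^sup>2"
    using \<open>(a n)\<^sup>2 \<le> B\<close> zero_le_power2 [of "a (Suc n)"] by linarith
  then have dt_lower: "- (B / \<kappa>) \<le> ((a (Suc n))\<^sup>2 - (a n)\<^sup>2) / \<kappa>"
    using divide_right_mono [of "- B" _ \<kappa>] pos by simp
  have data: "0 \<le> b n" "0 \<le> b (Suc n)" "r (Suc n) \<le> c / 4" "\<rho> (Suc n) \<le> c / 4"
    "B / \<kappa> + f (Suc n) < c / 4"
    using Suc.prems nonneg small [of "Suc n"] source_small by auto
  have coercive_Suc: "1 < b (Suc n) \<Longrightarrow> c * b (Suc n) \<le> D (Suc n)"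
    using Suc.prems coercive [of "Suc n"] by simp
  have step_Suc: "((a (Suc n))\<^sup>2 - (a n)\<^sup>2) / \<kappa> + D (Suc n) \<le> b (Suc n) * r (Suc n)
      + b (Suc n) * \<rho> (Suc n) + \<mu> * b (Suc n) * b n powr (1 - \<theta>) * a n powr \<theta> + f (Suc n)"
    using Suc.prems step [of "Suc n"] by simp
  have "b (Suc n) \<le> 1"
    using pos by (intro step_stays_le_one [OF pos(2,5) data(1) \<open>b n \<le> 1\<close> data(2-4) a_small _ dt_lower
          data(5) coercive_Suc step_Suc]) simp
  with Suc show ?case
    by (simp add: le_Suc_eq)
qed (simp add: initial_le_one)

lemma energy_Suc_le:
  assumes "m < M" "\<forall>j\<le>m. energy j \<le> B"
  shows "energy (Suc m) \<le> (1 + \<kappa> * gronwall_rate c \<mu> \<theta>) * energy m + \<kappa> * source (Suc m)"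
proof -
  define C where "C = gronwall_rate c \<mu> \<theta>"
  have "(a j)\<^sup>2 \<le> B" if "j < Suc m" for j
    using energy_ge(1) [of j] assms that by (fastforce simp: less_Suc_eq_le)
  then have "b (Suc m) \<le> 1"
    using le_one_upto [of "Suc m"] \<open>m < M\<close> by simp
  then have coercive_Suc: "c * (b (Suc m))\<^sup>2 \<le> D (Suc m)"
    using coercive [of "Suc m"] \<open>m < M\<close> by simp
  have step_Suc: "((a (Suc m))\<^sup>2 - (a m)\<^sup>2) / \<kappa> + D (Suc m) \<le> b (Suc m) * r (Suc m)
      + b (Suc m) * \<rho> (Suc m) + \<mu> * b (Suc m) * b m powr (1 - \<theta>) * a m powr \<theta> + f (Suc m)"
    using step [of "Suc m"] \<open>m < M\<close> by simp
  have nonneg_m: "0 \<le> a m" "0 \<le> b m" "0 \<le> b (Suc m)"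
    using nonneg [of m] nonneg [of "Suc m"] \<open>m < M\<close> by simp_all
  have "((a (Suc m))\<^sup>2 - (a m)\<^sup>2) / \<kappa> + 9 * c / 16 * (b (Suc m))\<^sup>2
      \<le> c / 16 * (b m)\<^sup>2 + source (Suc m) + C * (a m)\<^sup>2"
    using step_energy_inequality [OF pos(2-5) nonneg_m coercive_Suc step_Suc]
    unfolding source_def C_def by linarith
  then have "\<kappa> * (((a (Suc m))\<^sup>2 - (a m)\<^sup>2) / \<kappa> + 9 * c / 16 * (b (Suc m))\<^sup>2)
      \<le> \<kappa> * (c / 16 * (b m)\<^sup>2 + source (Suc m) + C * (a m)\<^sup>2)"
    using pos by (intro mult_left_mono) auto
  then have "(a (Suc m))\<^sup>2 - (a m)\<^sup>2 + \<kappa> * (9 * c / 16 * (b (Suc m))\<^sup>2)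
      \<le> \<kappa> * (c / 16 * (b m)\<^sup>2) + \<kappa> * source (Suc m) + \<kappa> * (C * (a m)\<^sup>2)"
    using pos by (simp add: distrib_left)
  moreover have "energy (Suc m) = energy m + ((a (Suc m))\<^sup>2 - (a m)\<^sup>2
      + \<kappa> * (9 * c / 16 * (b (Suc m))\<^sup>2)) - \<kappa> * (c / 16 * (b m)\<^sup>2)"
    by (simp add: energy_def algebra_simps)
  moreover have "\<kappa> * (C * (a m)\<^sup>2) \<le> \<kappa> * (C * energy m)"
    using energy_ge pos gronwall_rate_pos [OF pos(2,3), of \<theta>]
    by (intro mult_left_mono) (auto simp: C_def)
  moreover have "(1 + \<kappa> * C) * energy m = energy m + \<kappa> * (C * energy m)"
    by (simp add: algebra_simps)
  ultimately show ?thesis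
    unfolding C_def by linarith
qed

lemma energy_bound:
  assumes "(1 + \<kappa> * gronwall_rate c \<mu> \<theta>) ^ M * ((a 0)\<^sup>2 + \<kappa> * c / 16 * (b 0)\<^sup>2
      + \<kappa> * (\<Sum>m=1..M. 2 * ((r m)\<^sup>2 + (\<rho> m)\<^sup>2) / c + f m)) \<le> B"
  shows "(\<forall>m\<le>M. b m \<le> 1) \<and> (\<forall>m\<le>M. (a m)\<^sup>2 \<le> B) \<and> c / 2 * \<kappa> * (\<Sum>m=1..M. (b m)\<^sup>2) \<le> B"
proof -
  have "0 \<le> gronwall_rate c \<mu> \<theta>"
    using gronwall_rate_pos [OF pos(2,3)] by (simp add: less_imp_le)
  have "\<forall>m\<le>M. energy m \<le> B"
  proof (rule discrete_gronwall_bootstrap [where e = "\<lambda>m. \<kappa> * source m"])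
    show "1 \<le> 1 + \<kappa> * gronwall_rate c \<mu> \<theta>" "0 \<le> energy 0"
      using pos \<open>0 \<le> gronwall_rate c \<mu> \<theta>\<close> by (simp_all add: energy_def)
    show "0 \<le> \<kappa> * source j" if "1 \<le> j" "j \<le> M" for j
      using that small [of j] pos by (simp add: source_def)
    show "(1 + \<kappa> * gronwall_rate c \<mu> \<theta>) ^ M * (energy 0 + (\<Sum>j=1..M. \<kappa> * source j)) \<le> B"
      using assms by (simp add: energy_def source_def sum_distrib_left)
  qed (use energy_Suc_le in blast)
  then show ?thesis
    using le_one_upto [of M] energy_ge by (meson le_less order_trans)
qed

end

lemma initial_energy_le:
  fixes a b r s \<rho> \<sigma> :: "nat \<Rightarrow> real" and \<kappa> h c \<mu>0 :: real
  assumes "0 < \<kappa>" "\<kappa> \<le> 1" "0 < c" "0 < \<mu>0"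
    and "(a 0)\<^sup>2 \<le> \<mu>0 * h\<^sup>2" "(b 0)\<^sup>2 \<le> \<mu>0 * h\<^sup>2"
    and "\<kappa> * (\<Sum>m=1..M. (r m)\<^sup>2) \<le> \<mu>0 * h\<^sup>2" "\<kappa> * (\<Sum>m=1..M. (s m)\<^sup>2) \<le> \<mu>0 * h\<^sup>2"
    and "\<kappa> * (\<Sum>m=1..M. (\<rho> m)\<^sup>2) \<le> \<mu>0 * \<kappa>\<^sup>2" "\<kappa> * (\<Sum>m=1..M. (\<sigma> m)\<^sup>2) \<le> \<mu>0 * \<kappa>\<^sup>2"
  shows "(a 0)\<^sup>2 + \<kappa> * c / 16 * (b 0)\<^sup>2
      + \<kappa> * (\<Sum>m=1..M. 2 * ((r m)\<^sup>2 + (\<rho> m)\<^sup>2) / c + ((s m)\<^sup>2 + (\<sigma> m)\<^sup>2))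
    \<le> \<mu>0 * (2 + c / 16 + 2 / c) * (h\<^sup>2 + \<kappa>\<^sup>2)"
proof -
  have "\<kappa> * (\<Sum>m=1..M. 2 * ((r m)\<^sup>2 + (\<rho> m)\<^sup>2) / c + ((s m)\<^sup>2 + (\<sigma> m)\<^sup>2))
      = 2 / c * (\<kappa> * (\<Sum>m=1..M. (r m)\<^sup>2)) + 2 / c * (\<kappa> * (\<Sum>m=1..M. (\<rho> m)\<^sup>2))
        + \<kappa> * (\<Sum>m=1..M. (s m)\<^sup>2) + \<kappa> * (\<Sum>m=1..M. (\<sigma> m)\<^sup>2)"
    by (simp add: sum.distrib sum_distrib_left algebra_simps add_divide_distrib)
  moreover have "2 / c * (\<kappa> * (\<Sum>m=1..M. (r m)\<^sup>2)) \<le> 2 / c * (\<mu>0 * h\<^sup>2)"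
    "2 / c * (\<kappa> * (\<Sum>m=1..M. (\<rho> m)\<^sup>2)) \<le> 2 / c * (\<mu>0 * \<kappa>\<^sup>2)"
    using assms by (intro mult_left_mono; simp)+
  moreover have "\<kappa> * c / 16 * (b 0)\<^sup>2 \<le> 1 * c / 16 * (\<mu>0 * h\<^sup>2)"
    using assms by (intro mult_mono) auto
  moreover have "\<mu>0 * (2 + c / 16 + 2 / c) * (h\<^sup>2 + \<kappa>\<^sup>2)
      = 2 * (\<mu>0 * h\<^sup>2) + c / 16 * (\<mu>0 * h\<^sup>2) + 2 / c * (\<mu>0 * h\<^sup>2)
        + 2 / c * (\<mu>0 * \<kappa>\<^sup>2) + \<mu>0 * \<kappa>\<^sup>2 + (1 + c / 16) * (\<mu>0 * \<kappa>\<^sup>2)"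
    by (simp add: algebra_simps)
  moreover have "0 \<le> (1 + c / 16) * (\<mu>0 * \<kappa>\<^sup>2)"
    using assms by simp
  ultimately show ?thesis
    using assms by linarith
qed

lemma max_sq_plus_scaled_sum_sq_le:
  fixes a b :: "nat \<Rightarrow> real" and c \<kappa> B K :: real
  assumes "\<forall>m\<le>M. (a m)\<^sup>2 \<le> B" "c / 2 * \<kappa> * (\<Sum>m=1..M. (b m)\<^sup>2) \<le> B" "c * \<kappa> * (b 0)\<^sup>2 \<le> K"
  shows "(MAX m\<in>{0..M}. (a m)\<^sup>2) + c * \<kappa> * (\<Sum>m=0..M. (b m)\<^sup>2) \<le> 3 * B + K"
proof -
  have "(MAX m\<in>{0..M}. (a m)\<^sup>2) \<le> B"
    using assms(1) by simp
  moreover have "c * \<kappa> * (\<Sum>m=0..M. (b m)\<^sup>2)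
      = c * \<kappa> * (b 0)\<^sup>2 + 2 * (c / 2 * \<kappa> * (\<Sum>m=1..M. (b m)\<^sup>2))"
    by (simp add: sum.atLeast_Suc_atMost algebra_simps)
  ultimately show ?thesis
    using assms(2,3) by linarith
qed

lemma one_plus_power_le_exp:
  fixes x :: real
  assumes "0 \<le> x"
  shows "(1 + x) ^ n \<le> exp (x * real n)"
proof -
  have "(1 + x) ^ n \<le> exp x ^ n"
    using assms by (intro power_mono) auto
  then show ?thesis
    by (simp add: exp_of_nat_mult [symmetric] mult.commute)
qed

lemma small_step_bounds:
  fixes \<kappa> h t :: real
  assumes "0 < \<kappa>" "\<kappa> < t" "h\<^sup>2 < t * \<kappa>" "t \<le> 1"
  shows "\<kappa> \<le> 1" "h\<^sup>2 / \<kappa> < t" "h\<^sup>2 \<le> t" "h\<^sup>2 + \<kappa>\<^sup>2 \<le> 2 * t"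
proof -
  show "\<kappa> \<le> 1" "h\<^sup>2 / \<kappa> < t"
    using assms by (simp_all add: divide_less_eq mult.commute)
  have "t * \<kappa> \<le> t" "\<kappa>\<^sup>2 < t * \<kappa>"
    using assms \<open>\<kappa> \<le> 1\<close> mult_left_mono [of \<kappa> 1 t] by (simp_all add: power2_eq_square)
  with assms show "h\<^sup>2 \<le> t" "h\<^sup>2 + \<kappa>\<^sup>2 \<le> 2 * t"
    by linarith+
qed

lemma data_pointwise_small:
  fixes r s \<rho> \<sigma> :: "nat \<Rightarrow> real" and \<kappa> h t \<mu>0 c :: real
  assumes "0 < \<kappa>" "\<kappa> < t" "h\<^sup>2 / \<kappa> < t" "0 < \<mu>0" "0 < c" "\<mu>0 * t \<le> (c / 4)\<^sup>2"
    and "\<kappa> * (\<Sum>m=1..M. (r m)\<^sup>2) \<le> \<mu>0 * h\<^sup>2" "\<kappa> * (\<Sum>m=1..M. (s m)\<^sup>2) \<le> \<mu>0 * h\<^sup>2"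
      "\<kappa> * (\<Sum>m=1..M. (\<rho> m)\<^sup>2) \<le> \<mu>0 * \<kappa>\<^sup>2" "\<kappa> * (\<Sum>m=1..M. (\<sigma> m)\<^sup>2) \<le> \<mu>0 * \<kappa>\<^sup>2"
    and "1 \<le> m" "m \<le> M"
  shows "r m \<le> c / 4 \<and> \<rho> m \<le> c / 4 \<and> (s m)\<^sup>2 + (\<sigma> m)\<^sup>2 \<le> \<mu>0 * (h\<^sup>2 / \<kappa> + \<kappa>)"
proof -
  have "(r m)\<^sup>2 \<le> \<mu>0 * h\<^sup>2 / \<kappa>" "(s m)\<^sup>2 \<le> \<mu>0 * h\<^sup>2 / \<kappa>"
    using sq_le_of_scaled_sum_sq [OF \<open>0 < \<kappa>\<close> _ \<open>1 \<le> m\<close> \<open>m \<le> M\<close>] assms(7,8) by blast+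
  moreover have "(\<rho> m)\<^sup>2 \<le> \<mu>0 * \<kappa>\<^sup>2 / \<kappa>" "(\<sigma> m)\<^sup>2 \<le> \<mu>0 * \<kappa>\<^sup>2 / \<kappa>"
    using sq_le_of_scaled_sum_sq [OF \<open>0 < \<kappa>\<close> _ \<open>1 \<le> m\<close> \<open>m \<le> M\<close>] assms(9,10) by blast+
  then have "(\<rho> m)\<^sup>2 \<le> \<mu>0 * \<kappa>" "(\<sigma> m)\<^sup>2 \<le> \<mu>0 * \<kappa>"
    using \<open>0 < \<kappa>\<close> by (simp_all add: power2_eq_square)
  moreover have "\<mu>0 * h\<^sup>2 / \<kappa> \<le> \<mu>0 * t" "\<mu>0 * \<kappa> \<le> \<mu>0 * t"
    using assms mult_left_mono [of "h\<^sup>2 / \<kappa>" t \<mu>0] by simp_all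
  then have "\<mu>0 * h\<^sup>2 / \<kappa> \<le> (c / 4)\<^sup>2" "\<mu>0 * \<kappa> \<le> (c / 4)\<^sup>2"
    using assms(6) by linarith+
  ultimately show ?thesis
    using \<open>0 < c\<close> power2_le_imp_le [of _ "c / 4"] by (simp add: distrib_left)
qed

locale grid_data =
  fixes a b r s \<rho> \<sigma> :: "nat \<Rightarrow> real"
    and T \<kappa> h t \<mu>0 \<mu>1 \<mu>3 \<Lambda> lam p \<theta> c C A :: real and M :: nat
  assumes params: "1 < p" "p \<le> 2" "0 < \<mu>0" "0 < \<mu>1" "0 < \<mu>3" "0 < \<theta>" "\<theta> \<le> 1"
      "0 \<le> lam" "lam \<le> \<Lambda>"
    and constants: "c = \<mu>1 * (1 + \<Lambda>) powr (p - 2)" "C = gronwall_rate c \<mu>3 \<theta>"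
      "A = \<mu>0 * (2 + c / 16 + 2 / c)"
    and grid: "0 < \<kappa>" "\<kappa> * real M = T" "\<kappa> < t" "h\<^sup>2 < t * \<kappa>"
    and threshold: "t \<le> 1" "\<mu>0 * t \<le> 1" "\<mu>0 * t \<le> (c / 4)\<^sup>2"
      "(exp (C * T) * A + \<mu>0) * t \<le> c / 8" "\<mu>3 * sqrt (2 * (exp (C * T) * A) * t) powr \<theta> \<le> c / 4"
    and nonneg: "\<And>m. m \<le> M \<Longrightarrow> 0 \<le> a m \<and> 0 \<le> b m"
    and data: "(a 0)\<^sup>2 \<le> \<mu>0 * h\<^sup>2" "(b 0)\<^sup>2 \<le> \<mu>0 * h\<^sup>2"
      "\<kappa> * (\<Sum>m=1..M. (r m)\<^sup>2) \<le> \<mu>0 * h\<^sup>2" "\<kappa> * (\<Sum>m=1..M. (s m)\<^sup>2) \<le> \<mu>0 * h\<^sup>2"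
      "\<kappa> * (\<Sum>m=1..M. (\<rho> m)\<^sup>2) \<le> \<mu>0 * \<kappa>\<^sup>2" "\<kappa> * (\<Sum>m=1..M. (\<sigma> m)\<^sup>2) \<le> \<mu>0 * \<kappa>\<^sup>2"
    and step: "\<And>m. 1 \<le> m \<Longrightarrow> m \<le> M \<Longrightarrow>
      dt_sq \<kappa> a m + \<mu>1 * (lam + b m) powr (p - 2) * (b m)\<^sup>2
        \<le> b m * r m + b m * \<rho> m + \<mu>3 * b m * b (m - 1) powr (1 - \<theta>) * a (m - 1) powr \<theta>
          + (s m)\<^sup>2 + (\<sigma> m)\<^sup>2"
begin

definition bound :: real where
  "bound = exp (C * T) * (A * (h\<^sup>2 + \<kappa>\<^sup>2))"

lemma constants_pos: "0 < c" "0 < C" "0 < A"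
proof -
  show "0 < c"
    using params by (simp add: constants)
  then show "0 < C" "0 < A"
    using params by (auto simp: constants gronwall_rate_pos intro!: mult_pos_pos add_pos_pos)
qed

lemmas step_bounds = small_step_bounds [OF grid(1,3,4) threshold(1)]

lemma is_discrete_energy_data:
  "discrete_energy_data a b r \<rho> (\<lambda>m. (s m)\<^sup>2 + (\<sigma> m)\<^sup>2)
    (\<lambda>m. \<mu>1 * (lam + b m) powr (p - 2) * (b m)\<^sup>2) \<kappa> c \<mu>3 \<theta> bound (\<mu>0 * (h\<^sup>2 / \<kappa> + \<kappa>)) M"
proof unfold_locales
  show "b 0 \<le> 1"
  proof (rule power2_le_imp_le)
    have "\<mu>0 * h\<^sup>2 \<le> \<mu>0 * t"
      using step_bounds(3) params by (intro mult_left_mono) auto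
    then show "(b 0)\<^sup>2 \<le> 1\<^sup>2"
      using data(2) threshold by simp
  qed simp
  have "\<mu>3 * sqrt bound powr \<theta> \<le> \<mu>3 * sqrt (2 * (exp (C * T) * A) * t) powr \<theta>"
    using step_bounds(4) constants_pos params
    by (intro mult_left_mono powr_mono2) (auto simp: bound_def mult_left_mono)
  then show "\<mu>3 * sqrt bound powr \<theta> \<le> c / 4"
    using threshold by linarith
  have "bound / \<kappa> + \<mu>0 * (h\<^sup>2 / \<kappa> + \<kappa>) = (exp (C * T) * A + \<mu>0) * (h\<^sup>2 / \<kappa> + \<kappa>)"
    using grid by (simp add: bound_def field_simps power2_eq_square)
  also have "\<dots> < (exp (C * T) * A + \<mu>0) * (2 * t)"
    using params grid constants_pos step_bounds(2)
    by (intro mult_strict_left_mono add_pos_pos mult_pos_pos) auto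
  finally show "bound / \<kappa> + \<mu>0 * (h\<^sup>2 / \<kappa> + \<kappa>) < c / 4"
    using threshold by linarith
  fix m
  assume m: "1 \<le> m" "m \<le> M"
  show "r m \<le> c / 4 \<and> \<rho> m \<le> c / 4 \<and> 0 \<le> (s m)\<^sup>2 + (\<sigma> m)\<^sup>2
      \<and> (s m)\<^sup>2 + (\<sigma> m)\<^sup>2 \<le> \<mu>0 * (h\<^sup>2 / \<kappa> + \<kappa>)"
    using data_pointwise_small [OF grid(1,3) step_bounds(2) params(3) constants_pos(1) threshold(3)
        data(3-6) m] by simp
  show "(b m \<le> 1 \<longrightarrow> c * (b m)\<^sup>2 \<le> \<mu>1 * (lam + b m) powr (p - 2) * (b m)\<^sup>2)
      \<and> (1 < b m \<longrightarrow> c * b m \<le> \<mu>1 * (lam + b m) powr (p - 2) * (b m)\<^sup>2)"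
    using coercive_term_ge_sq [of \<mu>1 lam \<Lambda> "b m" p] coercive_term_ge_linear [of \<mu>1 lam \<Lambda> "b m" p]
      nonneg [OF m(2)] params
    by (auto simp: constants)
  show "((a m)\<^sup>2 - (a (m - 1))\<^sup>2) / \<kappa> + \<mu>1 * (lam + b m) powr (p - 2) * (b m)\<^sup>2
      \<le> b m * r m + b m * \<rho> m + \<mu>3 * b m * b (m - 1) powr (1 - \<theta>) * a (m - 1) powr \<theta>
        + ((s m)\<^sup>2 + (\<sigma> m)\<^sup>2)"
    using step [OF m] unfolding dt_sq_def by linarith
qed (use grid(1) constants_pos params nonneg in simp_all)

lemma energy_bounds:
  "(\<forall>m\<le>M. b m \<le> 1) \<and> (\<forall>m\<le>M. (a m)\<^sup>2 \<le> bound) \<and> c / 2 * \<kappa> * (\<Sum>m=1..M. (b m)\<^sup>2) \<le> bound"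
proof -
  interpret discrete_energy_data a b r \<rho> "\<lambda>m. (s m)\<^sup>2 + (\<sigma> m)\<^sup>2"
      "\<lambda>m. \<mu>1 * (lam + b m) powr (p - 2) * (b m)\<^sup>2" \<kappa> c \<mu>3 \<theta> bound "\<mu>0 * (h\<^sup>2 / \<kappa> + \<kappa>)" M
    by (rule is_discrete_energy_data)
  have "(1 + \<kappa> * C) ^ M \<le> exp (C * T)"
    using one_plus_power_le_exp [of "\<kappa> * C" M] constants_pos grid by (simp add: ac_simps)
  then have "(1 + \<kappa> * C) ^ M * ((a 0)\<^sup>2 + \<kappa> * c / 16 * (b 0)\<^sup>2
      + \<kappa> * (\<Sum>m=1..M. 2 * ((r m)\<^sup>2 + (\<rho> m)\<^sup>2) / c + ((s m)\<^sup>2 + (\<sigma> m)\<^sup>2))) \<le> bound"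
    unfolding bound_def unfolding constants(3)
    using initial_energy_le [where a = a and b = b and r = r and s = s and \<rho> = \<rho> and \<sigma> = \<sigma>,
        OF grid(1) step_bounds(1) constants_pos(1) params(3) data] constants_pos grid
    by (intro mult_mono) (auto intro!: add_nonneg_nonneg mult_nonneg_nonneg sum_nonneg)
  then show ?thesis
    using energy_bound by (simp add: constants(2))
qed

lemma estimate:
  "(\<forall>m\<le>M. b m \<le> 1)
    \<and> (MAX m\<in>{0..M}. (a m)\<^sup>2) + c * \<kappa> * (\<Sum>m=0..M. (b m)\<^sup>2)
      \<le> (3 * A + c * \<mu>0) * (h\<^sup>2 + \<kappa>\<^sup>2) * exp (C * T)"
proof -
  have "c * \<kappa> * (b 0)\<^sup>2 \<le> c * 1 * (\<mu>0 * h\<^sup>2)"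
    using constants_pos step_bounds(1) grid data(2) by (intro mult_mono) auto
  also have "\<dots> \<le> c * \<mu>0 * (h\<^sup>2 + \<kappa>\<^sup>2)"
    using constants_pos params by (simp add: algebra_simps)
  finally have "(MAX m\<in>{0..M}. (a m)\<^sup>2) + c * \<kappa> * (\<Sum>m=0..M. (b m)\<^sup>2)
      \<le> 3 * bound + c * \<mu>0 * (h\<^sup>2 + \<kappa>\<^sup>2)"
    using energy_bounds by (intro max_sq_plus_scaled_sum_sq_le) auto
  also have "\<dots> \<le> (3 * A + c * \<mu>0) * (h\<^sup>2 + \<kappa>\<^sup>2) * exp (C * T)"
  proof -
    have "0 \<le> T"
      unfolding grid(2) [symmetric] using grid(1) by simp
    then have "1 \<le> exp (C * T)"
      using constants_pos by simp
    then have "c * \<mu>0 * (h\<^sup>2 + \<kappa>\<^sup>2) * 1 \<le> c * \<mu>0 * (h\<^sup>2 + \<kappa>\<^sup>2) * exp (C * T)"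
      using constants_pos params by (intro mult_left_mono) auto
    then show ?thesis
      by (simp add: bound_def algebra_simps)
  qed
  finally show ?thesis
    using energy_bounds by blast
qed

end

lemma small_threshold_exists:
  fixes \<kappa>hat \<mu>0 \<mu>3 \<theta> c B0 :: real
  assumes "0 < \<kappa>hat" "0 < \<mu>0" "0 < \<mu>3" "0 < \<theta>" "0 < c" "0 < B0"
  shows "\<exists>t>0. t \<le> 1 \<and> t \<le> \<kappa>hat \<and> \<mu>0 * t \<le> 1 \<and> \<mu>0 * t \<le> (c / 4)\<^sup>2
    \<and> (B0 + \<mu>0) * t \<le> c / 8 \<and> \<mu>3 * sqrt (2 * B0 * t) powr \<theta> \<le> c / 4"
proof -
  define \<eta> where "\<eta> = (c / 4 / \<mu>3) powr (1 / \<theta>)"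
  define t where "t = min (min 1 \<kappa>hat) (min (1 / \<mu>0)
    (min ((c / 4)\<^sup>2 / \<mu>0) (min (c / (8 * (B0 + \<mu>0))) (\<eta>\<^sup>2 / (2 * B0)))))"
  have "0 < t"
    using assms by (simp add: t_def \<eta>_def)
  have "t \<le> 1" "t \<le> \<kappa>hat" "t \<le> 1 / \<mu>0" "t \<le> (c / 4)\<^sup>2 / \<mu>0"
    "t \<le> c / (8 * (B0 + \<mu>0))" "t \<le> \<eta>\<^sup>2 / (2 * B0)"
    by (simp_all add: t_def)
  then have "\<mu>0 * t \<le> 1" "\<mu>0 * t \<le> (c / 4)\<^sup>2" "(B0 + \<mu>0) * t \<le> c / 8" "2 * B0 * t \<le> \<eta>\<^sup>2"
    using assms by (simp_all add: field_simps)
  moreover have "\<mu>3 * sqrt (2 * B0 * t) powr \<theta> \<le> c / 4"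
    using \<open>2 * B0 * t \<le> \<eta>\<^sup>2\<close> assms \<open>0 < t\<close>
    by (intro mult_powr_le_of_le_root) (auto simp: \<eta>_def real_le_lsqrt)
  ultimately show ?thesis
    using \<open>0 < t\<close> \<open>t \<le> 1\<close> \<open>t \<le> \<kappa>hat\<close> by blast
qed

theorem lemma2p4:
  fixes p T \<mu>0 \<kappa>hat \<mu>1 \<mu>2 \<mu>3 \<Lambda> \<theta> :: real
  assumes "1 < p" "p \<le> 2" "0 < T"
    and "0 < \<mu>0" "0 < \<kappa>hat"
    and "0 < \<mu>1" "0 < \<mu>2" "0 < \<mu>3" "0 < \<Lambda>" "0 < \<theta>" "\<theta> \<le> 1"
  shows "\<exists>\<mu>0bar \<kappa>bar \<mu>4 \<mu>5. 0 < \<mu>0bar \<and> 0 < \<kappa>bar \<and> 0 < \<mu>4 \<and> 0 < \<mu>5 \<and>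
    (\<forall>(lam::real) (a::real \<Rightarrow> nat \<Rightarrow> nat \<Rightarrow> real) (b::real \<Rightarrow> nat \<Rightarrow> nat \<Rightarrow> real)
        (r::real \<Rightarrow> nat \<Rightarrow> nat \<Rightarrow> real) (s::real \<Rightarrow> nat \<Rightarrow> nat \<Rightarrow> real)
        (\<rho>::real \<Rightarrow> nat \<Rightarrow> nat \<Rightarrow> real) (\<sigma>::real \<Rightarrow> nat \<Rightarrow> nat \<Rightarrow> real).
      0 \<le> lam \<and> lam \<le> \<Lambda>
      \<and> (\<forall>h M m. m \<le> M \<longrightarrow> 0 \<le> a h M m \<and> 0 \<le> b h M m)
      \<and> (\<forall>h M m. 1 \<le> m \<and> m \<le> M \<longrightarrow>
            0 \<le> r h M m \<and> 0 \<le> s h M m \<and> 0 \<le> \<rho> h M m \<and> 0 \<le> \<sigma> h M m)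
      \<and> (\<forall>h (M::nat). 0 < h \<and> h < 1 / sqrt \<mu>0 \<and> 1 \<le> M \<and> T / real M < \<kappa>hat \<longrightarrow>
            (a h M 0)\<^sup>2 \<le> \<mu>0 * h\<^sup>2 \<and> (b h M 0)\<^sup>2 \<le> \<mu>0 * h\<^sup>2
          \<and> (T / real M) * (\<Sum>m=1..M. (r h M m)\<^sup>2) \<le> \<mu>0 * h\<^sup>2
          \<and> (T / real M) * (\<Sum>m=1..M. (s h M m)\<^sup>2) \<le> \<mu>0 * h\<^sup>2
          \<and> (T / real M) * (\<Sum>m=1..M. (\<rho> h M m)\<^sup>2) \<le> \<mu>0 * (T / real M)\<^sup>2
          \<and> (T / real M) * (\<Sum>m=1..M. (\<sigma> h M m)\<^sup>2) \<le> \<mu>0 * (T / real M)\<^sup>2)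
      \<and> (\<forall>h (M::nat) m. 0 < h \<and> h < 1 / sqrt \<mu>0 \<and> 1 \<le> M \<and> T / real M < \<kappa>hat
            \<and> 1 \<le> m \<and> m \<le> M \<longrightarrow>
            dt_sq (T / real M) (a h M) m
              + \<mu>1 * (lam + b h M m) powr (p - 2) * (b h M m)\<^sup>2
            \<le> b h M m * r h M m + b h M m * \<rho> h M m + \<mu>2 * b h M (m - 1) * b h M m
              + (s h M m)\<^sup>2 + (\<sigma> h M m)\<^sup>2
          \<and> dt_sq (T / real M) (a h M) m
              + \<mu>1 * (lam + b h M m) powr (p - 2) * (b h M m)\<^sup>2
            \<le> b h M m * r h M m + b h M m * \<rho> h M m
              + \<mu>3 * b h M m * b h M (m - 1) powr (1 - \<theta>) * a h M (m - 1) powr \<theta>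
              + (s h M m)\<^sup>2 + (\<sigma> h M m)\<^sup>2)
      \<longrightarrow>
      (\<forall>h (M::nat). 0 < h \<and> 1 \<le> M \<and> T / real M < \<kappa>bar \<and> h\<^sup>2 < \<mu>0bar * (T / real M) \<longrightarrow>
          (\<forall>m \<le> M. b h M m \<le> 1)
        \<and> (MAX m\<in>{0..M}. (a h M m)\<^sup>2)
            + \<mu>1 * (1 + \<Lambda>) powr (p - 2) * (T / real M) * (\<Sum>m=0..M. (b h M m)\<^sup>2)
          \<le> \<mu>4 * (h\<^sup>2 + (T / real M)\<^sup>2) * exp (2 * \<mu>5 * (T / real M) * real M)))"
proof -
  define c where "c = \<mu>1 * (1 + \<Lambda>) powr (p - 2)"
  define C where "C = gronwall_rate c \<mu>3 \<theta>"
  define A where "A = \<mu>0 * (2 + c / 16 + 2 / c)"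
  define B0 where "B0 = exp (C * T) * A"
  have "0 < c" "0 < C"
    using assms by (simp_all add: c_def C_def gronwall_rate_pos)
  then have "0 < A" "0 < B0" "0 < 3 * A + c * \<mu>0" "0 < C / 2"
    using assms by (auto simp: A_def B0_def intro!: mult_pos_pos add_pos_pos)
  obtain t where "0 < t" "t \<le> 1" "t \<le> \<kappa>hat" "\<mu>0 * t \<le> 1"
    and threshold: "\<mu>0 * t \<le> (c / 4)\<^sup>2" "(B0 + \<mu>0) * t \<le> c / 8" "\<mu>3 * sqrt (2 * B0 * t) powr \<theta> \<le> c / 4"
    using small_threshold_exists [of \<kappa>hat \<mu>0 \<mu>3 \<theta> c B0] assms \<open>0 < c\<close> \<open>0 < B0\<close> by blast
  show ?thesis
    apply (rule exI [of _ t], rule exI [of _ t], rule exI [of _ "3 * A + c * \<mu>0"],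
        rule exI [of _ "C / 2"])
    apply (intro conjI [OF \<open>0 < t\<close>] conjI [OF \<open>0 < 3 * A + c * \<mu>0\<close>] conjI [OF \<open>0 < C / 2\<close>]
        allI impI)
    subgoal premises prems for lam a b r s \<rho> \<sigma> h M
    proof -
      have grid: "0 < h" "1 \<le> M" "T / real M < t" "h\<^sup>2 < t * (T / real M)"
        using prems(2) by auto
      have "0 < T / real M" "T / real M * real M = T" "T / real M < \<kappa>hat"
        using grid assms \<open>t \<le> \<kappa>hat\<close> by auto
      have "t * (T / real M) \<le> t"
        by (rule mult_left_le) (use grid \<open>t \<le> 1\<close> \<open>0 < t\<close> in linarith)+
      then have "\<mu>0 * h\<^sup>2 < 1"
        using grid \<open>\<mu>0 * t \<le> 1\<close> mult_strict_left_mono [of "h\<^sup>2" t \<mu>0] assms by linarith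
      then have "h < 1 / sqrt \<mu>0"
        using real_less_rsqrt [of h "1 / \<mu>0"] assms by (simp add: real_sqrt_divide field_simps)
      have exp_eq: "exp (2 * (C / 2) * (T / real M) * real M) = exp (C * T)"
        using grid(2) by simp
      interpret grid_data "a h M" "b h M" "r h M" "s h M" "\<rho> h M" "\<sigma> h M" T "T / real M" h t
          \<mu>0 \<mu>1 \<mu>3 \<Lambda> lam p \<theta> c C A M
        by unfold_locales
          (use assms grid threshold \<open>t \<le> 1\<close> \<open>\<mu>0 * t \<le> 1\<close> \<open>0 < T / real M\<close>
            \<open>T / real M * real M = T\<close> in \<open>simp add: c_def C_def A_def B0_def; fail\<close>
          | use prems(1) grid \<open>T / real M < \<kappa>hat\<close> \<open>h < 1 / sqrt \<mu>0\<close> in blast)+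
      show ?thesis
        using estimate unfolding exp_eq c_def [symmetric] .
    qed
    done
qed

end
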